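(* Let $(\mathbf X,\mathbf Y)$ be a general correlated source satisfying the conditional strong converse property, i.e. $\underline H(\mathbf X|\mathbf Y)=\overline H(\mathbf X|\mathbf Y)$. Then for any $\varepsilon\in[0,1]$, \[R^\varepsilon_{com}(\mathbf X|\mathbf Y)=(1-\varepsilon)\underline H(\mathbf X|\mathbf Y)=(1-\varepsilon)\overline H(\mathbf X|\mathbf Y).\]
   Context: A general correlated source $(\mathbf X,\mathbf Y)=\{(X^n,Y^n)\}_{n\ge1}$ is an arbitrary sequence of pairs of random variables on $\mathcal X^n\times\mathcal Y^n$, $\mathcal X,\mathcal Y$ finite or countably infinite (no structural assumptions). Logs base 2. $\mathrm{p\text{-}limsup}_n Z_n=\inf\{\alpha:\lim_n\Pr\{Z_n>\alpha\}=0\}$, $\mathrm{p\text{-}liminf}_n Z_n=\sup\{\beta:\lim_n\Pr\{Z_n<\beta\}=0\}$; $\overline H(\mathbf X|\mathbf Y)=\mathrm{p\text{-}limsup}_n\frac1n\log\frac1{P_{X^n|Y^n}(X^n|Y^n)}$, $\underline H(\mathbf X|\mathbf Y)=\mathrm{p\text{-}liminf}_n\frac1n\log\frac1{P_{X^n|Y^n}(X^n|Y^n)}$. Coding with common side-information: a blocklength-$n$ code is $(\varphi_n,\psi_n)$, $\varphi_n:\mathcal X^n\times\mathcal Y^n\to\{0,1\}^*$ with $\{\varphi_n(x^n|y^n):x^n\}$ prefix-free for each $y^n$, $\psi_n:\{0,1\}^*\times\mathcal Y^n\to\mathcal X^n$; error probability $\Pr\{\psi_n(\varphi_n(X^n|Y^n),Y^n)\ne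 X^n\}$; $\ell_n(x^n|y^n)$ the codeword length. For $\varepsilon\in[0,1]$, $R$ is $\varepsilon$-achievable if there are codes with $\limsup_n$ error probability $\le\varepsilon$ and $\limsup_n\frac1n\mathbb E[\ell_n(X^n|Y^n)]\le R$; $R^\varepsilon_{com}(\mathbf X|\mathbf Y)$ is the infimum of $\varepsilon$-achievable rates. *)

theory Defs
  imports "HOL-Probability.Probability" "HOL-Library.Sublist"
begin

definition general_source :: "(nat \<Rightarrow> ('a list \<times> 'b list) pmf) \<Rightarrow> bool" where
  "general_source P \<longleftrightarrow>
     (\<forall>n\<ge>1. set_pmf (P n) \<subseteq> {(x, y). length x = n \<and> length y = n})"

definition cond_prob :: "(nat \<Rightarrow> ('a list \<times> 'b list) pmf) \<Rightarrow> nat \<Rightarrow> 'a list \<Rightarrow> 'b list \<Rightarrow> real" where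
  "cond_prob P n x y = pmf (P n) (x, y) / pmf (map_pmf snd (P n)) y"

definition cond_info_dens :: "(nat \<Rightarrow> ('a list \<times> 'b list) pmf) \<Rightarrow> nat \<Rightarrow> 'a list \<times> 'b list \<Rightarrow> real" where
  "cond_info_dens P n xy = (1 / real n) * log 2 (1 / cond_prob P n (fst xy) (snd xy))"

definition p_limsup :: "(nat \<Rightarrow> 'c pmf) \<Rightarrow> (nat \<Rightarrow> 'c \<Rightarrow> real) \<Rightarrow> ereal" where
  "p_limsup M Z = Inf {\<alpha>::ereal.
     (\<lambda>n. measure_pmf.prob (M n) {\<omega>. ereal (Z n \<omega>) > \<alpha>}) \<longlonglongrightarrow> 0}"

definition p_liminf :: "(nat \<Rightarrow> 'c pmf) \<Rightarrow> (nat \<Rightarrow> 'c \<Rightarrow> real) \<Rightarrow> ereal" where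
  "p_liminf M Z = Sup {\<beta>::ereal.
     (\<lambda>n. measure_pmf.prob (M n) {\<omega>. ereal (Z n \<omega>) < \<beta>}) \<longlonglongrightarrow> 0}"

definition cond_spectral_sup_entropy :: "(nat \<Rightarrow> ('a list \<times> 'b list) pmf) \<Rightarrow> ereal" where
  "cond_spectral_sup_entropy P = p_limsup P (cond_info_dens P)"

definition cond_spectral_inf_entropy :: "(nat \<Rightarrow> ('a list \<times> 'b list) pmf) \<Rightarrow> ereal" where
  "cond_spectral_inf_entropy P = p_liminf P (cond_info_dens P)"

definition prefix_free :: "bool list set \<Rightarrow> bool" where
  "prefix_free C \<longleftrightarrow> (\<forall>c\<in>C. \<forall>c'\<in>C. c \<noteq> c' \<longrightarrow> \<not> prefix c c')"

definition valid_code :: "nat \<Rightarrow> ('a list \<Rightarrow> 'b list \<Rightarrow> bool list) \<Rightarrow> bool" where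
  "valid_code n enc \<longleftrightarrow>
     (\<forall>y. length y = n \<longrightarrow> prefix_free {enc x y | x. length x = n})"

definition error_prob :: "(nat \<Rightarrow> ('a list \<times> 'b list) pmf) \<Rightarrow> nat \<Rightarrow>
    ('a list \<Rightarrow> 'b list \<Rightarrow> bool list) \<Rightarrow> (bool list \<Rightarrow> 'b list \<Rightarrow> 'a list) \<Rightarrow> real" where
  "error_prob P n enc dec = measure_pmf.prob (P n) {(x, y). dec (enc x y) y \<noteq> x}"

definition exp_length :: "(nat \<Rightarrow> ('a list \<times> 'b list) pmf) \<Rightarrow> nat \<Rightarrow>
    ('a list \<Rightarrow> 'b list \<Rightarrow> bool list) \<Rightarrow> ennreal" where
  "exp_length P n enc = (\<integral>\<^sup>+ xy. ennreal (real (length (enc (fst xy) (snd xy)))) \<partial>measure_pmf (P n))"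

definition achievable_com :: "(nat \<Rightarrow> ('a list \<times> 'b list) pmf) \<Rightarrow> real \<Rightarrow> real \<Rightarrow> bool" where
  "achievable_com P \<epsilon> R \<longleftrightarrow>
     (\<exists>(enc :: nat \<Rightarrow> 'a list \<Rightarrow> 'b list \<Rightarrow> bool list) (dec :: nat \<Rightarrow> bool list \<Rightarrow> 'b list \<Rightarrow> 'a list).
        (\<forall>n\<ge>1. valid_code n (enc n)) \<and>
        limsup (\<lambda>n. ereal (error_prob P n (enc n) (dec n))) \<le> ereal \<epsilon> \<and>
        limsup (\<lambda>n. ereal (1 / real n) * enn2ereal (exp_length P n (enc n))) \<le> ereal R)"

definition R_com :: "(nat \<Rightarrow> ('a list \<times> 'b list) pmf) \<Rightarrow> real \<Rightarrow> ereal" where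
  "R_com P \<epsilon> = Inf (ereal ` {R. achievable_com P \<epsilon> R})"

end

theory Submission
  imports Defs
begin

text \<open>Let \<open>Z\<^sub>n\<close> be the normalised conditional information density.
  Converse: fix \<open>0 < a < M < H_inf\<close>. Fewer than \<open>2 ^ (n a + 1)\<close> words have length at most
  \<open>n a\<close>, and the pairs decoded correctly from a fixed word \<open>w\<close> lie on the graph
  \<open>x = dec w y\<close>. Those with \<open>P(x|y) \<le> 2 powr (- n M)\<close> have total mass at most
  \<open>2 ^ (n a + 1) * 2 powr (- n M) \<rightarrow> 0\<close>, the others have mass \<open>Pr{Z\<^sub>n < M} \<rightarrow> 0\<close>. So
  asymptotically a fraction \<open>1 - \<epsilon>\<close> of the pairs gets codewords longer than \<open>n a\<close>.
  Achievability: for \<open>0 < s < H_inf\<close> and \<open>r > H_sup\<close> the pairs with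
  \<open>2 powr (- n r) \<le> P(x|y) \<le> 2 powr (- n s)\<close> carry mass tending to one, and for each \<open>y\<close>
  at most \<open>2 ^ \<lceil>n r\<rceil>\<close> values of \<open>x\<close> qualify, so they can be indexed by \<open>\<lceil>n r\<rceil>\<close> bits.
  Encoding only a part of mass \<open>1 - \<epsilon>\<close> and sending a single flag bit otherwise gives error
  \<open>\<epsilon>\<close> and rate \<open>(1 - \<epsilon>) r\<close>. The two bounds meet when \<open>H_inf = H_sup\<close>.\<close>

subsection \<open>Conditional probabilities\<close>

lemma pmf_le_pmf_map_snd: "pmf M (x, y) \<le> pmf (map_pmf snd M) y"
proof -
  have "pmf M (x, y) = measure M {(x, y)}" by (simp add: measure_pmf_single)
  also have "\<dots> \<le> measure M (snd -` {y})" by (rule measure_pmf.finite_measure_mono) auto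
  finally show ?thesis by (simp add: pmf_map)
qed

lemma pmf_eq_cond_prob_mult: "pmf (P n) (x, y) = cond_prob P n x y * pmf (map_pmf snd (P n)) y"
  using pmf_le_pmf_map_snd[of "P n" x y]
  by (cases "pmf (map_pmf snd (P n)) y = 0") (simp_all add: cond_prob_def)

lemma cond_prob_nonneg: "0 \<le> cond_prob P n x y"
  by (simp add: cond_prob_def)

lemma cond_prob_le_1: "cond_prob P n x y \<le> 1"
  using pmf_le_pmf_map_snd[of "P n" x y] by (auto simp: cond_prob_def divide_le_eq_1)

lemma pmf_le_cond_prob: "pmf (P n) (x, y) \<le> cond_prob P n x y"
  using mult_left_mono[OF pmf_le_1 cond_prob_nonneg] by (simp add: pmf_eq_cond_prob_mult)

lemma cond_prob_pos: "(x, y) \<in> set_pmf (P n) \<Longrightarrow> 0 < cond_prob P n x y"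
  using pmf_eq_cond_prob_mult[of P n x y] cond_prob_nonneg[of P n x y]
  by (auto simp: set_pmf_eq zero_less_mult_iff order_less_le)

lemma sum_cond_prob_le_1:
  assumes "finite S"
  shows "(\<Sum>x\<in>S. cond_prob P n x y) \<le> 1"
proof (cases "pmf (map_pmf snd (P n)) y = 0")
  case True
  then show ?thesis by (simp add: cond_prob_def)
next
  case False
  then have pos: "0 < pmf (map_pmf snd (P n)) y" by (simp add: order_less_le)
  have "(\<Sum>x\<in>S. cond_prob P n x y) * pmf (map_pmf snd (P n)) y = (\<Sum>x\<in>S. pmf (P n) (x, y))"
    by (simp add: pmf_eq_cond_prob_mult sum_distrib_right)
  also have "\<dots> = measure (P n) ((\<lambda>x. (x, y)) ` S)"
    using assms by (simp add: measure_measure_pmf_finite sum.reindex inj_on_def)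
  also have "\<dots> \<le> measure (P n) (snd -` {y})" by (rule measure_pmf.finite_measure_mono) auto
  also have "\<dots> = 1 * pmf (map_pmf snd (P n)) y" by (simp add: pmf_map)
  finally show ?thesis using pos by (simp only: mult_le_cancel_right)
qed

lemma card_mult_le_1_if_cond_prob_ge:
  assumes "finite S" and "\<And>x. x \<in> S \<Longrightarrow> c \<le> cond_prob P n x y"
  shows "real (card S) * c \<le> 1"
proof -
  have "real (card S) * c = (\<Sum>x\<in>S. c)" by simp
  also have "\<dots> \<le> (\<Sum>x\<in>S. cond_prob P n x y)" using assms(2) by (rule sum_mono)
  also have "\<dots> \<le> 1" using assms(1) by (rule sum_cond_prob_le_1)
  finally show ?thesis .
qed

lemma finite_cond_prob_ge:
  assumes "0 < c"
  shows "finite {x. c \<le> cond_prob P n x y}"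
proof (rule ccontr)
  assume "infinite {x. c \<le> cond_prob P n x y}"
  then obtain S where S: "finite S" "card S = nat \<lceil>1 / c\<rceil> + 1" "S \<subseteq> {x. c \<le> cond_prob P n x y}"
    using infinite_arbitrarily_large by blast
  then have "real (card S) * c \<le> 1" by (intro card_mult_le_1_if_cond_prob_ge) auto
  moreover have "1 / c < real (card S)" using S(2) by linarith
  ultimately show False using assms by (simp add: field_simps)
qed

lemma card_cond_prob_ge_le:
  assumes "0 < c"
  shows "real (card {x. c \<le> cond_prob P n x y}) * c \<le> 1"
  using finite_cond_prob_ge[OF assms] by (rule card_mult_le_1_if_cond_prob_ge) simp

lemma measure_graph_cond_prob_le:
  fixes P :: "nat \<Rightarrow> ('a list \<times> 'b list) pmf"
  assumes "0 \<le> c"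
  shows "measure (P n) {(x, y). x = g y \<and> cond_prob P n x y \<le> c} \<le> c"
proof -
  define Y where "Y = {y. cond_prob P n (g y) y \<le> c}"
  have graph: "{(x, y). x = g y \<and> cond_prob P n x y \<le> c} = (\<lambda>y. (g y, y)) ` Y"
    by (auto simp: Y_def)
  have "emeasure (P n) ((\<lambda>y. (g y, y)) ` Y) = (\<integral>\<^sup>+y. pmf (P n) (g y, y) \<partial>count_space Y)"
    by (subst nn_integral_pmf') (auto simp: inj_on_def)
  also have "\<dots> \<le> (\<integral>\<^sup>+y. ennreal c * pmf (map_pmf snd (P n)) y \<partial>count_space Y)"
  proof (rule nn_integral_mono)
    fix y assume "y \<in> space (count_space Y)"
    then have "pmf (P n) (g y, y) \<le> c * pmf (map_pmf snd (P n)) y"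
      unfolding pmf_eq_cond_prob_mult by (intro mult_right_mono) (auto simp: Y_def)
    then show "ennreal (pmf (P n) (g y, y)) \<le> ennreal c * ennreal (pmf (map_pmf snd (P n)) y)"
      using assms by (simp add: ennreal_mult[symmetric])
  qed
  also have "\<dots> = ennreal c * emeasure (map_pmf snd (P n)) Y"
    by (simp add: nn_integral_cmult nn_integral_pmf)
  also have "\<dots> \<le> ennreal c"
    using mult_left_mono[OF measure_pmf.emeasure_le_1[of "map_pmf snd (P n)" Y], of "ennreal c"] by simp
  finally show ?thesis
    unfolding graph using assms by (simp add: measure_pmf.emeasure_eq_measure)
qed

subsection \<open>Tails of the conditional information density\<close>

lemma cond_info_dens_less_iff:
  assumes "0 < n" "0 < cond_prob P n x y"
  shows "cond_info_dens P n (x, y) < M \<longleftrightarrow> 2 powr (- (real n * M)) < cond_prob P n x y"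
proof -
  have "cond_info_dens P n (x, y) < M \<longleftrightarrow> - (real n * M) < log 2 (cond_prob P n x y)"
    using assms by (auto simp: cond_info_dens_def log_divide field_simps)
  also have "\<dots> \<longleftrightarrow> 2 powr (- (real n * M)) < cond_prob P n x y"
    using assms by (intro less_log_iff) auto
  finally show ?thesis .
qed

lemma cond_info_dens_greater_iff:
  assumes "0 < n" "0 < cond_prob P n x y"
  shows "M < cond_info_dens P n (x, y) \<longleftrightarrow> cond_prob P n x y < 2 powr (- (real n * M))"
proof -
  have "M < cond_info_dens P n (x, y) \<longleftrightarrow> log 2 (cond_prob P n x y) < - (real n * M)"
    using assms by (auto simp: cond_info_dens_def log_divide field_simps)
  also have "\<dots> \<longleftrightarrow> cond_prob P n x y < 2 powr (- (real n * M))"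
    using assms by (intro log_less_iff) auto
  finally show ?thesis .
qed

lemma measure_pmf_mono_on_support:
  "A \<inter> set_pmf M \<subseteq> B \<Longrightarrow> measure M A \<le> measure M B"
  by (metis measure_Int_set_pmf measure_pmf.finite_measure_mono sets_measure_pmf UNIV_I)

lemma tendsto_measure_cond_prob_gt:
  fixes P :: "nat \<Rightarrow> ('a list \<times> 'b list) pmf"
  assumes "ereal M < cond_spectral_inf_entropy P"
  shows "(\<lambda>n. measure (P n) {(x, y). 2 powr (- (real n * M)) < cond_prob P n x y}) \<longlonglongrightarrow> 0"
proof -
  obtain \<beta> where \<beta>: "(\<lambda>n. measure (P n) {\<omega>. ereal (cond_info_dens P n \<omega>) < \<beta>}) \<longlonglongrightarrow> 0"
    and "ereal M < \<beta>"
    using assms unfolding cond_spectral_inf_entropy_def p_liminf_def less_Sup_iff by blast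
  have "measure (P n) {(x, y). 2 powr (- (real n * M)) < cond_prob P n x y}
      \<le> measure (P n) {\<omega>. ereal (cond_info_dens P n \<omega>) < \<beta>}" if "0 < n" for n
  proof (intro measure_pmf_mono_on_support, clarify)
    fix x y assume xy: "(x, y) \<in> set_pmf (P n)" "2 powr (- (real n * M)) < cond_prob P n x y"
    then have "ereal (cond_info_dens P n (x, y)) < ereal M"
      using cond_info_dens_less_iff[OF \<open>0 < n\<close> cond_prob_pos[of x y P n, OF xy(1)]] by simp
    then show "ereal (cond_info_dens P n (x, y)) < \<beta>" using \<open>ereal M < \<beta>\<close> by (rule less_trans)
  qed
  then show ?thesis
    by (intro tendsto_sandwich[OF _ _ tendsto_const \<beta>] eventually_mono[OF eventually_gt_at_top[of 0]])
       auto
qed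

lemma tendsto_measure_cond_prob_lt:
  fixes P :: "nat \<Rightarrow> ('a list \<times> 'b list) pmf"
  assumes "cond_spectral_sup_entropy P < ereal M"
  shows "(\<lambda>n. measure (P n) {(x, y). cond_prob P n x y < 2 powr (- (real n * M))}) \<longlonglongrightarrow> 0"
proof -
  obtain \<alpha> where \<alpha>: "(\<lambda>n. measure (P n) {\<omega>. \<alpha> < ereal (cond_info_dens P n \<omega>)}) \<longlonglongrightarrow> 0"
    and "\<alpha> < ereal M"
    using assms unfolding cond_spectral_sup_entropy_def p_limsup_def Inf_less_iff by blast
  have "measure (P n) {(x, y). cond_prob P n x y < 2 powr (- (real n * M))}
      \<le> measure (P n) {\<omega>. \<alpha> < ereal (cond_info_dens P n \<omega>)}" if "0 < n" for n
  proof (intro measure_pmf_mono_on_support, clarify)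
    fix x y assume xy: "(x, y) \<in> set_pmf (P n)" "cond_prob P n x y < 2 powr (- (real n * M))"
    then have "ereal M < ereal (cond_info_dens P n (x, y))"
      using cond_info_dens_greater_iff[OF \<open>0 < n\<close> cond_prob_pos[of x y P n, OF xy(1)]] by simp
    then show "\<alpha> < ereal (cond_info_dens P n (x, y))" using \<open>\<alpha> < ereal M\<close> by (rule less_trans[rotated])
  qed
  then show ?thesis
    by (intro tendsto_sandwich[OF _ _ tendsto_const \<alpha>] eventually_mono[OF eventually_gt_at_top[of 0]])
       auto
qed

lemma tendsto_measure_cond_prob_ge:
  fixes P :: "nat \<Rightarrow> ('a list \<times> 'b list) pmf"
  assumes "cond_spectral_sup_entropy P < ereal M"
  shows "(\<lambda>n. measure (P n) {(x, y). 2 powr (- (real n * M)) \<le> cond_prob P n x y}) \<longlonglongrightarrow> 1"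
proof -
  have "measure (P n) {(x, y). 2 powr (- (real n * M)) \<le> cond_prob P n x y}
      = 1 - measure (P n) {(x, y). cond_prob P n x y < 2 powr (- (real n * M))}" for n
    by (subst measure_pmf.prob_compl[symmetric]) (auto intro: arg_cong[where f = "measure (P n)"])
  then show ?thesis
    using tendsto_diff[OF tendsto_const tendsto_measure_cond_prob_lt[OF assms], of 1] by simp
qed

lemma cond_spectral_inf_entropy_nonneg: "0 \<le> cond_spectral_inf_entropy P"
proof -
  have "{\<omega>. ereal (cond_info_dens P n \<omega>) < 0} \<inter> set_pmf (P n) = {}" for n
  proof (intro equals0I, clarify)
    fix x y assume "ereal (cond_info_dens P n (x, y)) < 0" "(x, y) \<in> set_pmf (P n)"
    moreover from this have "0 < cond_prob P n x y" by (simp add: cond_prob_pos)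
    ultimately show False
      using cond_prob_le_1[of P n x y] by (auto simp: cond_info_dens_def log_divide zero_less_divide_iff)
  qed
  then have "measure (P n) {\<omega>. ereal (cond_info_dens P n \<omega>) < 0} = 0" for n
    by (metis measure_Int_set_pmf measure_empty)
  then show ?thesis
    unfolding cond_spectral_inf_entropy_def p_liminf_def by (intro Sup_upper) simp
qed

subsection \<open>The converse\<close>

lemma card_bool_lists_length_le: "card {w :: bool list. length w \<le> k} < 2 ^ (k + 1)"
proof -
  have "card {w :: bool list. length w \<le> k} = (\<Sum>i\<le>k. 2 ^ i)"
    using card_lists_length_le[of "UNIV :: bool set" k] by simp
  also have "\<dots> = 2 ^ (k + 1) - 1"
    using sum_power2[of "Suc k"] by (simp add: atLeast0LessThan lessThan_Suc_atMost)
  finally show ?thesis by simp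
qed

lemma measure_decoded_short_codeword_le:
  fixes P :: "nat \<Rightarrow> ('a list \<times> 'b list) pmf"
    and enc :: "'a list \<Rightarrow> 'b list \<Rightarrow> bool list" and dec :: "bool list \<Rightarrow> 'b list \<Rightarrow> 'a list"
  assumes "0 \<le> c"
  shows "measure (P n) {(x, y). dec (enc x y) y = x \<and> length (enc x y) \<le> k}
     \<le> measure (P n) {(x, y). c < cond_prob P n x y} + 2 ^ (k + 1) * c"
proof -
  define W where "W = {w :: bool list. length w \<le> k}"
  define A where "A w = {(x, y). x = dec w y \<and> cond_prob P n x y \<le> c}" for w
  have "finite W"
    using finite_lists_length_le[of "UNIV :: bool set" k] by (simp add: W_def)
  moreover have "real (card W) \<le> real (2 ^ (k + 1))"
    using card_bool_lists_length_le[of k] unfolding W_def by linarith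
  ultimately have W: "finite W" "real (card W) \<le> 2 ^ (k + 1)" by simp_all
  have "measure (P n) {(x, y). dec (enc x y) y = x \<and> length (enc x y) \<le> k}
      \<le> measure (P n) ({(x, y). c < cond_prob P n x y} \<union> (\<Union>w\<in>W. A w))"
    by (intro measure_pmf.finite_measure_mono) (force simp: W_def A_def)+
  also have "\<dots> \<le> measure (P n) {(x, y). c < cond_prob P n x y} + measure (P n) (\<Union>w\<in>W. A w)"
    by (rule measure_Un_le) auto
  also have "measure (P n) (\<Union>w\<in>W. A w) \<le> (\<Sum>w\<in>W. measure (P n) (A w))"
    using W by (intro measure_pmf.finite_measure_subadditive_finite) auto
  also have "\<dots> \<le> (\<Sum>w\<in>W. c)"
    unfolding A_def using assms by (intro sum_mono measure_graph_cond_prob_le)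
  also have "\<dots> \<le> 2 ^ (k + 1) * c"
    using W assms by (simp add: mult_right_mono)
  finally show ?thesis by simp
qed

lemma exp_length_ge:
  fixes P :: "nat \<Rightarrow> ('a list \<times> 'b list) pmf"
    and enc :: "'a list \<Rightarrow> 'b list \<Rightarrow> bool list" and dec :: "bool list \<Rightarrow> 'b list \<Rightarrow> 'a list"
  shows "ereal (real (k + 1) * (1 - error_prob P n enc dec
           - measure (P n) {(x, y). dec (enc x y) y = x \<and> length (enc x y) \<le> k}))
        \<le> enn2ereal (exp_length P n enc)"
proof -
  define Long where "Long = {(x, y). dec (enc x y) y = x \<and> k < length (enc x y)}"
  define Short where "Short = {(x, y). dec (enc x y) y = x \<and> length (enc x y) \<le> k}"
  have "{(x, y). dec (enc x y) y \<noteq> x} \<union> (Long \<union> Short) = UNIV"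
    by (auto simp: Long_def Short_def)
  then have "1 = measure (P n) ({(x, y). dec (enc x y) y \<noteq> x} \<union> (Long \<union> Short))"
    by simp
  also have "\<dots> \<le> error_prob P n enc dec + measure (P n) (Long \<union> Short)"
    unfolding error_prob_def by (rule measure_Un_le) auto
  also have "measure (P n) (Long \<union> Short) \<le> measure (P n) Long + measure (P n) Short"
    by (rule measure_Un_le) auto
  finally have "1 - error_prob P n enc dec - measure (P n) Short \<le> measure (P n) Long"
    by simp
  then have "ereal (real (k + 1) * (1 - error_prob P n enc dec - measure (P n) Short))
      \<le> enn2ereal (ennreal (real (k + 1) * measure (P n) Long))"
    by (simp add: mult_left_mono)
  also have "\<dots> \<le> enn2ereal (exp_length P n enc)"
  proof -
    have "ennreal (real (k + 1) * measure (P n) Long)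
        = (\<integral>\<^sup>+ xy. ennreal (real (k + 1)) * indicator Long xy \<partial>measure_pmf (P n))"
      by (simp add: nn_integral_cmult measure_pmf.emeasure_eq_measure ennreal_mult)
    also have "\<dots> \<le> exp_length P n enc"
      unfolding exp_length_def
      by (intro nn_integral_mono) (auto simp: Long_def indicator_def ennreal_leI simp del: of_nat_Suc)
    finally show ?thesis by (simp only: less_eq_ennreal.rep_eq)
  qed
  finally show ?thesis unfolding Short_def .
qed

lemma exp_length_rate_ge:
  fixes P :: "nat \<Rightarrow> ('a list \<times> 'b list) pmf"
    and enc :: "'a list \<Rightarrow> 'b list \<Rightarrow> bool list" and dec :: "bool list \<Rightarrow> 'b list \<Rightarrow> 'a list"
  assumes "0 < n" and "0 < a"
  shows "ereal (a * (1 - error_prob P n enc dec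
            - measure (P n) {(x, y). 2 powr (- (real n * M)) < cond_prob P n x y}
            - 2 * 2 powr (- ((M - a) * real n))))
         \<le> ereal (1 / real n) * enn2ereal (exp_length P n enc)"
proof -
  define k where "k = nat \<lfloor>real n * a\<rfloor>"
  define q where "q = 1 - error_prob P n enc dec
    - measure (P n) {(x, y). 2 powr (- (real n * M)) < cond_prob P n x y} - 2 * 2 powr (- ((M - a) * real n))"
  have "real k = real_of_int \<lfloor>real n * a\<rfloor>"
    using assms by (simp add: k_def)
  then have k: "real k \<le> real n * a" "real n * a \<le> real k + 1"
    using floor_correct[of "real n * a"] real_of_int_floor_add_one_ge[of "real n * a"] by linarith+
  have "(2::real) ^ (k + 1) * 2 powr (- (real n * M)) = 2 * 2 powr (real k - real n * M)"
    by (simp add: powr_realpow[symmetric] powr_add[symmetric])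
  also have "\<dots> \<le> 2 * 2 powr (- ((M - a) * real n))"
    using k(1) by (simp add: algebra_simps)
  finally have "q \<le> 1 - error_prob P n enc dec
      - measure (P n) {(x, y). dec (enc x y) y = x \<and> length (enc x y) \<le> k}"
    using measure_decoded_short_codeword_le[of "2 powr (- (real n * M))" P n dec enc k]
    unfolding q_def by simp
  then have len: "ereal (real (k + 1) * q) \<le> enn2ereal (exp_length P n enc)"
    by (intro order.trans[OF _ exp_length_ge[of k P n enc dec]]) (simp add: mult_left_mono)
  show ?thesis
  proof (cases "q \<le> 0")
    case True
    then have "ereal (a * q) \<le> 0" using assms by (simp add: mult_nonneg_nonpos)
    also have "0 \<le> ereal (1 / real n) * enn2ereal (exp_length P n enc)" by simp
    finally show ?thesis by (simp add: q_def)
  next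
    case False
    have "ereal (real n * a * q) \<le> enn2ereal (exp_length P n enc)"
      using k(2) False by (intro order.trans[OF _ len]) (simp add: mult_right_mono)
    then have "ereal (1 / real n) * ereal (real n * a * q)
        \<le> ereal (1 / real n) * enn2ereal (exp_length P n enc)"
      by (rule ereal_mult_left_mono) simp
    then show ?thesis using assms by (simp add: q_def)
  qed
qed

lemma mult_le_of_limsup_le:
  fixes e v :: "nat \<Rightarrow> real" and X :: "nat \<Rightarrow> ereal"
  assumes e: "limsup (\<lambda>n. ereal (e n)) \<le> ereal \<epsilon>" and v: "v \<longlonglongrightarrow> 0"
    and X: "limsup X \<le> ereal R" and "0 < a"
    and bound: "eventually (\<lambda>n. ereal (a * (1 - e n - v n)) \<le> X n) sequentially"
  shows "a * (1 - \<epsilon>) \<le> R"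
proof (rule field_le_epsilon)
  fix d :: real assume "0 < d"
  define \<delta> where "\<delta> = d / (1 + 2 * a)"
  have "0 < \<delta>" and \<delta>: "\<delta> * (1 + 2 * a) = d" using \<open>0 < d\<close> \<open>0 < a\<close> by (simp_all add: \<delta>_def)
  have "eventually (\<lambda>n. ereal (e n) < ereal (\<epsilon> + \<delta>)) sequentially"
    using \<open>0 < \<delta>\<close> by (intro Limsup_lessD le_less_trans[OF e]) simp
  moreover have "eventually (\<lambda>n. X n < ereal (R + \<delta>)) sequentially"
    using \<open>0 < \<delta>\<close> by (intro Limsup_lessD le_less_trans[OF X]) simp
  ultimately have "eventually (\<lambda>n. e n < \<epsilon> + \<delta> \<and> v n < \<delta> \<and> a * (1 - e n - v n) < R + \<delta>) sequentially"
    using bound order_tendstoD(2)[OF v \<open>0 < \<delta>\<close>]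
  proof eventually_elim
    case (elim n)
    then have "ereal (a * (1 - e n - v n)) < ereal (R + \<delta>)" by (meson le_less_trans)
    with elim show ?case by simp
  qed
  then obtain n where "e n < \<epsilon> + \<delta>" "v n < \<delta>" "a * (1 - e n - v n) < R + \<delta>"
    unfolding eventually_sequentially by auto
  then have "a * (1 - \<epsilon> - 2 * \<delta>) < R + \<delta>"
    using mult_strict_left_mono[OF _ \<open>0 < a\<close>, of "1 - \<epsilon> - 2 * \<delta>" "1 - e n - v n"] by linarith
  then show "a * (1 - \<epsilon>) \<le> R + d" using \<delta> by (simp add: algebra_simps)
qed

lemma achievable_com_rate_ge:
  fixes P :: "nat \<Rightarrow> ('a list \<times> 'b list) pmf"
  assumes "achievable_com P \<epsilon> R" and "0 < a" and "ereal a < cond_spectral_inf_entropy P"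
  shows "a * (1 - \<epsilon>) \<le> R"
proof -
  obtain enc :: "nat \<Rightarrow> 'a list \<Rightarrow> 'b list \<Rightarrow> bool list" and dec :: "nat \<Rightarrow> bool list \<Rightarrow> 'b list \<Rightarrow> 'a list"
    where err: "limsup (\<lambda>n. ereal (error_prob P n (enc n) (dec n))) \<le> ereal \<epsilon>"
      and rate: "limsup (\<lambda>n. ereal (1 / real n) * enn2ereal (exp_length P n (enc n))) \<le> ereal R"
    using assms(1) unfolding achievable_com_def by blast
  obtain M where "ereal a < ereal M" "ereal M < cond_spectral_inf_entropy P"
    using ereal_dense2[OF assms(3)] by blast
  define v where "v n = measure (P n) {(x, y). 2 powr (- (real n * M)) < cond_prob P n x y}
    + 2 * 2 powr (- ((M - a) * real n))" for n
  have "(\<lambda>n::nat. 2 * 2 powr (- (c * real n)) :: real) \<longlonglongrightarrow> 0" if "0 < c" for c :: real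
    using that by real_asymp
  from this[of "M - a"] have v: "v \<longlonglongrightarrow> 0"
    unfolding v_def using \<open>ereal a < ereal M\<close>
      tendsto_add[OF tendsto_measure_cond_prob_gt[OF \<open>ereal M < _\<close>]] by simp
  have bound: "eventually (\<lambda>n. ereal (a * (1 - error_prob P n (enc n) (dec n) - v n))
      \<le> ereal (1 / real n) * enn2ereal (exp_length P n (enc n))) sequentially"
    using exp_length_rate_ge[OF _ assms(2), of _ P "enc _" "dec _" M]
    by (intro eventually_mono[OF eventually_gt_at_top[of 0]]) (simp only: v_def diff_diff_eq add.assoc)
  show ?thesis
    using err v rate assms(2) bound by (rule mult_le_of_limsup_le)
qed

subsection \<open>Achievability\<close>

lemma measure_to_nat_fibre_le:
  fixes M :: "'c::countable pmf"
  assumes "\<And>z. z \<in> B \<Longrightarrow> pmf M z \<le> \<eta>" and "0 \<le> \<eta>"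
  shows "measure M {z\<in>B. to_nat z = j} \<le> \<eta>"
proof (cases "\<exists>z\<in>B. to_nat z = j")
  case True
  then obtain z where "z \<in> B" "to_nat z = j" by blast
  then have "{z\<in>B. to_nat z = j} = {z}" by auto
  with \<open>z \<in> B\<close> show ?thesis using assms(1) by (simp add: measure_pmf_single)
next
  case False
  then have "{z\<in>B. to_nat z = j} = {}" by blast
  then show ?thesis using assms(2) by (metis measure_empty)
qed

text \<open>Enumerate \<open>B\<close> via \<open>to_nat\<close> and stop just before the mass exceeds \<open>t\<close>:
  each step adds at most one atom.\<close>

lemma exists_subset_measure_between:
  fixes M :: "'c::countable pmf"
  assumes "\<And>z. z \<in> B \<Longrightarrow> pmf M z \<le> \<eta>" and "0 \<le> \<eta>" and "0 \<le> t" and "t \<le> measure M B"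
  shows "\<exists>G\<subseteq>B. t - \<eta> \<le> measure M G \<and> measure M G \<le> t"
proof -
  define Init where "Init k = {z\<in>B. to_nat z < k}" for k
  show ?thesis
  proof (cases "\<exists>k. t < measure M (Init k)")
    case True
    define k where "k = (LEAST k. t < measure M (Init k))"
    have k: "t < measure M (Init k)"
      unfolding k_def by (rule LeastI_ex[OF True])
    then obtain j where j: "k = Suc j"
      using \<open>0 \<le> t\<close> by (cases k) (auto simp: Init_def)
    have "measure M (Init j) \<le> t"
      using not_less_Least[of j "\<lambda>k. t < measure M (Init k)"] by (simp add: k_def[symmetric] j)
    moreover have "measure M (Init k) \<le> measure M (Init j) + \<eta>"
    proof -
      have "measure M {z\<in>B. to_nat z = j} \<le> \<eta>"
        using assms(1,2) by (rule measure_to_nat_fibre_le)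
      moreover have "Init k = Init j \<union> {z\<in>B. to_nat z = j}"
        by (auto simp: Init_def j)
      ultimately show ?thesis
        using measure_Un_le[of "Init j" M "{z\<in>B. to_nat z = j}"] by simp
    qed
    ultimately show ?thesis
      using k by (intro exI[of _ "Init j"]) (auto simp: Init_def)
  next
    case False
    have "(\<lambda>k. measure M (Init k)) \<longlonglongrightarrow> measure M (\<Union>k. Init k)"
      by (rule measure_pmf.finite_Lim_measure_incseq) (auto simp: incseq_def Init_def)
    moreover have "(\<Union>k. Init k) = B" by (auto simp: Init_def)
    ultimately have "measure M B \<le> t"
      using False by (intro LIMSEQ_le_const2) (auto simp: not_less)
    then show ?thesis
      using assms(2,4) by (intro exI[of _ B]) auto
  qed
qed

lemma prefix_free_flagged_words:
  assumes "C \<subseteq> {[False]} \<union> {True # w | w. length w = L}"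
  shows "prefix_free C"
  unfolding prefix_free_def
proof (intro ballI impI notI)
  fix c c' assume "c \<in> C" "c' \<in> C" "c \<noteq> c'" "prefix c c'"
  then obtain zs where zs: "c' = c @ zs" by (auto simp: prefix_def)
  from \<open>c \<in> C\<close> \<open>c' \<in> C\<close> assms
  have "c = [False] \<or> (\<exists>w. c = True # w \<and> length w = L)"
    and "c' = [False] \<or> (\<exists>w. c' = True # w \<and> length w = L)" by auto
  then show False using zs \<open>c \<noteq> c'\<close> by auto
qed

lemma card_cond_prob_ge_powr_le: "card {x. 2 powr (- real L) \<le> cond_prob P n x y} \<le> 2 ^ L"
proof -
  have "real (card {x. 2 powr (- real L) \<le> cond_prob P n x y}) * 2 powr (- real L) \<le> 1"
    by (intro card_cond_prob_ge_le) simp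
  then have "real (card {x. 2 powr (- real L) \<le> cond_prob P n x y}) \<le> 2 powr real L"
    by (simp add: powr_minus divide_simps)
  also have "2 powr real L = real (2 ^ L)"
    by (simp add: powr_realpow)
  finally show ?thesis by (simp only: of_nat_le_iff)
qed

lemma exists_inj_cond_prob_ge_to_words:
  "\<exists>f. f ` {x. 2 powr (- real L) \<le> cond_prob P n x y} \<subseteq> {w :: bool list. length w = L}
     \<and> inj_on f {x. 2 powr (- real L) \<le> cond_prob P n x y}"
  using card_cond_prob_ge_powr_le[of L P n y] card_lists_length_eq[of "UNIV :: bool set" L]
    finite_lists_length_eq[of "UNIV :: bool set" L]
  by (intro card_le_inj) (simp_all add: finite_cond_prob_ge)

text \<open>The codeword is a flag bit followed by the \<open>L\<close>-bit index of \<open>x\<close> among the at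
  most \<open>2 ^ L\<close> candidates with \<open>cond_prob \<ge> 2 powr - L\<close>, or the flag alone (an error)
  when \<open>(x, y) \<notin> G\<close>.\<close>

lemma exists_code_correct_on:
  fixes P :: "nat \<Rightarrow> ('a list \<times> 'b list) pmf"
  assumes G: "G \<subseteq> {(x, y). 2 powr (- real L) \<le> cond_prob P n x y}"
  shows "\<exists>(enc :: 'a list \<Rightarrow> 'b list \<Rightarrow> bool list) (dec :: bool list \<Rightarrow> 'b list \<Rightarrow> 'a list).
     valid_code n enc \<and> error_prob P n enc dec \<le> 1 - measure (P n) G
     \<and> exp_length P n enc \<le> ennreal (1 + real L * measure (P n) G)"
proof -
  define S where "S y = {x. 2 powr (- real L) \<le> cond_prob P n x y}" for y
  define W where "W = {w :: bool list. length w = L}"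
  obtain idx where idx: "\<And>y. idx y ` S y \<subseteq> W" "\<And>y. inj_on (idx y) (S y)"
    using exists_inj_cond_prob_ge_to_words[of L P n] unfolding S_def W_def by metis
  define enc where "enc x y = (if (x, y) \<in> G then True # idx y x else [False])" for x y
  define dec where "dec c y = inv_into (S y) (idx y) (tl c)" for c y
  have GS: "(x, y) \<in> G \<Longrightarrow> x \<in> S y" for x y using G by (auto simp: S_def)
  have enc: "enc x y \<in> {[False]} \<union> {True # w | w. length w = L}" for x y
  proof (cases "(x, y) \<in> G")
    case True
    then have "idx y x \<in> W" using idx(1) GS by blast
    then show ?thesis using True by (simp add: enc_def W_def)
  qed (simp add: enc_def)
  then have "valid_code n enc"
    unfolding valid_code_def by (blast intro: prefix_free_flagged_words)
  moreover have "error_prob P n enc dec \<le> 1 - measure (P n) G"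
  proof -
    have "error_prob P n enc dec \<le> measure (P n) (UNIV - G)"
      unfolding error_prob_def
      by (rule measure_pmf.finite_measure_mono) (use GS idx(2) in \<open>auto simp: enc_def dec_def\<close>)
    then show ?thesis using measure_pmf.prob_compl[of G "P n"] by simp
  qed
  moreover have "exp_length P n enc \<le> ennreal (1 + real L * measure (P n) G)"
  proof -
    have "exp_length P n enc = (\<integral>\<^sup>+ xy. 1 + ennreal (real L) * indicator G xy \<partial>measure_pmf (P n))"
      unfolding exp_length_def
    proof (intro nn_integral_cong)
      fix xy :: "'a list \<times> 'b list"
      have "length (enc (fst xy) (snd xy)) = (if xy \<in> G then L + 1 else 1)"
        using enc[of "fst xy" "snd xy"] by (auto simp: enc_def)
      then show "ennreal (real (length (enc (fst xy) (snd xy)))) = 1 + ennreal (real L) * indicator G xy"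
        by (simp add: indicator_def ennreal_plus)
    qed
    also have "\<dots> = 1 + ennreal (real L) * emeasure (P n) G"
      by (simp add: nn_integral_add nn_integral_cmult measure_pmf.emeasure_space_1)
    also have "\<dots> = ennreal (1 + real L * measure (P n) G)"
      by (simp add: measure_pmf.emeasure_eq_measure ennreal_mult[symmetric] ennreal_plus)
    finally show ?thesis by simp
  qed
  ultimately show ?thesis by (intro exI[of _ enc] exI[of _ dec] conjI)
qed

lemma limsup_le_of_le_plus_vanishing:
  fixes X :: "nat \<Rightarrow> ereal"
  assumes "u \<longlonglongrightarrow> 0" and "eventually (\<lambda>n. X n \<le> ereal (r + u n)) sequentially"
  shows "limsup X \<le> ereal r"
proof -
  have "limsup X \<le> limsup (\<lambda>n. ereal (r + u n))"
    using assms(2) by (rule Limsup_mono)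
  also have "\<dots> = ereal r"
    using assms(1) by (intro lim_imp_Limsup) (auto intro!: tendsto_eq_intros)
  finally show ?thesis .
qed

lemma normalized_exp_length_le:
  assumes "exp_length P n enc \<le> ennreal b" and "0 \<le> b"
  shows "ereal (1 / real n) * enn2ereal (exp_length P n enc) \<le> ereal (b / real n)"
proof -
  have "enn2ereal (exp_length P n enc) \<le> ereal b"
    using assms by (simp add: less_eq_ennreal.rep_eq)
  then have "ereal (1 / real n) * enn2ereal (exp_length P n enc) \<le> ereal (1 / real n) * ereal b"
    by (rule ereal_mult_left_mono) simp
  then show ?thesis by simp
qed

lemma achievable_com_of_sets:
  fixes P :: "nat \<Rightarrow> ('a list \<times> 'b list) pmf" and G :: "nat \<Rightarrow> ('a list \<times> 'b list) set"
  assumes G: "\<And>n. G n \<subseteq> {(x, y). 2 powr (- (real n * r)) \<le> cond_prob P n x y}"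
    and "0 \<le> r" and "0 \<le> c" and measure_G: "\<And>n. measure (P n) (G n) \<le> c"
    and "u \<longlonglongrightarrow> 0" and miss: "\<And>n. 1 - measure (P n) (G n) \<le> \<epsilon> + u n"
  shows "achievable_com P \<epsilon> (r * c)"
proof -
  define L where "L n = nat \<lceil>real n * r\<rceil>" for n
  have L: "real n * r \<le> real (L n)" "real (L n) \<le> real n * r + 1" for n
    using \<open>0 \<le> r\<close> ceiling_correct[of "real n * r"] by (simp_all add: L_def)
  have "G n \<subseteq> {(x, y). 2 powr (- real (L n)) \<le> cond_prob P n x y}" for n
  proof -
    have pw: "2 powr (- real (L n)) \<le> 2 powr (- (real n * r))" using L(1)[of n] by simp
    show ?thesis using G[of n] by (auto intro: order.trans[OF pw])
  qed
  then have "\<exists>enc dec. valid_code n enc \<and> error_prob P n enc dec \<le> 1 - measure (P n) (G n)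
      \<and> exp_length P n enc \<le> ennreal (1 + real (L n) * measure (P n) (G n))" for n
    by (rule exists_code_correct_on)
  then obtain enc dec where code: "\<And>n. valid_code n (enc n)"
      "\<And>n. error_prob P n (enc n) (dec n) \<le> 1 - measure (P n) (G n)"
      "\<And>n. exp_length P n (enc n) \<le> ennreal (1 + real (L n) * measure (P n) (G n))"
    by metis
  have rate: "ereal (1 / real n) * enn2ereal (exp_length P n (enc n)) \<le> ereal (r * c + (1 + c) / real n)"
    if "0 < n" for n
  proof -
    have "1 + real (L n) * measure (P n) (G n) \<le> 1 + (real n * r + 1) * c"
      using L(2)[of n] measure_G[of n] \<open>0 \<le> c\<close> by (intro add_left_mono mult_mono) auto
    then have "exp_length P n (enc n) \<le> ennreal (1 + (real n * r + 1) * c)"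
      using code(3)[of n] by (meson ennreal_leI order.trans)
    then have "ereal (1 / real n) * enn2ereal (exp_length P n (enc n))
        \<le> ereal ((1 + (real n * r + 1) * c) / real n)"
      using \<open>0 \<le> r\<close> \<open>0 \<le> c\<close> by (intro normalized_exp_length_le) (simp_all add: add_nonneg_nonneg)
    then show ?thesis using that by (simp add: field_simps)
  qed
  show ?thesis
    unfolding achievable_com_def
  proof (intro exI conjI allI impI)
    show "valid_code n (enc n)" for n by (rule code(1))
    show "limsup (\<lambda>n. ereal (error_prob P n (enc n) (dec n))) \<le> ereal \<epsilon>"
      using code(2) miss
      by (intro limsup_le_of_le_plus_vanishing[OF \<open>u \<longlonglongrightarrow> 0\<close>] always_eventually allI)
         (auto intro: order.trans)
    show "limsup (\<lambda>n. ereal (1 / real n) * enn2ereal (exp_length P n (enc n))) \<le> ereal (r * c)"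
      using rate
      by (intro limsup_le_of_le_plus_vanishing[OF lim_const_over_n[of "1 + c"]]
          eventually_mono[OF eventually_gt_at_top[of 0]])
  qed
qed

lemma tendsto_measure_cond_prob_between:
  fixes P :: "nat \<Rightarrow> ('a list \<times> 'b list) pmf"
  assumes "ereal s < cond_spectral_inf_entropy P" and "cond_spectral_sup_entropy P < ereal r"
  shows "(\<lambda>n. measure (P n) {(x, y). 2 powr (- (real n * r)) \<le> cond_prob P n x y
                                 \<and> cond_prob P n x y \<le> 2 powr (- (real n * s))}) \<longlonglongrightarrow> 1"
    (is "(\<lambda>n. measure (P n) (?B n)) \<longlonglongrightarrow> 1")
proof -
  define Low where "Low n = {(x, y). cond_prob P n x y < 2 powr (- (real n * r))}" for n
  define High where "High n = {(x, y). 2 powr (- (real n * s)) < cond_prob P n x y}" for n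
  have lower: "1 - (measure (P n) (Low n) + measure (P n) (High n)) \<le> measure (P n) (?B n)" for n
  proof -
    have "1 - measure (P n) (?B n) = measure (P n) (UNIV - ?B n)"
      using measure_pmf.prob_compl[of "?B n" "P n"] by simp
    also have "\<dots> \<le> measure (P n) (Low n \<union> High n)"
      by (rule measure_pmf.finite_measure_mono) (auto simp: Low_def High_def not_le)
    also have "\<dots> \<le> measure (P n) (Low n) + measure (P n) (High n)"
      by (rule measure_Un_le) auto
    finally show ?thesis by linarith
  qed
  have "(\<lambda>n. 1 - (measure (P n) (Low n) + measure (P n) (High n))) \<longlonglongrightarrow> 1 - (0 + 0)"
    unfolding Low_def High_def
    by (intro tendsto_diff tendsto_const tendsto_add tendsto_measure_cond_prob_lt[OF assms(2)]
        tendsto_measure_cond_prob_gt[OF assms(1)])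
  then have "(\<lambda>n. 1 - (measure (P n) (Low n) + measure (P n) (High n))) \<longlonglongrightarrow> 1" by simp
  from tendsto_sandwich[OF always_eventually always_eventually this tendsto_const] lower
  show ?thesis by simp
qed

lemma achievable_com_above_sup_entropy:
  fixes P :: "nat \<Rightarrow> ('a::countable list \<times> 'b::countable list) pmf"
  assumes "cond_spectral_sup_entropy P < ereal r" and "0 \<le> r" and "0 \<le> \<epsilon>"
  shows "achievable_com P \<epsilon> r"
proof -
  define G where "G n = {(x, y). 2 powr (- (real n * r)) \<le> cond_prob P n x y}" for n
  have "(\<lambda>n. 1 - measure (P n) (G n)) \<longlonglongrightarrow> 1 - 1"
    unfolding G_def by (intro tendsto_intros tendsto_measure_cond_prob_ge assms(1))
  then have "achievable_com P \<epsilon> (r * 1)"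
    using assms(2,3) by (intro achievable_com_of_sets[where G = G]) (auto simp: G_def)
  then show ?thesis by simp
qed

text \<open>On the typical set every atom has mass at most \<open>2 powr (- n * s)\<close>, so it can be
  trimmed to mass \<open>1 - \<epsilon>\<close> up to a vanishing error; the remaining pairs are left undecoded.\<close>

lemma achievable_com_between_entropies:
  fixes P :: "nat \<Rightarrow> ('a::countable list \<times> 'b::countable list) pmf"
  assumes "0 < s" and "ereal s < cond_spectral_inf_entropy P"
    and "cond_spectral_sup_entropy P < ereal r" and "0 \<le> r"
    and "0 \<le> \<epsilon>" and "\<epsilon> \<le> 1"
  shows "achievable_com P \<epsilon> ((1 - \<epsilon>) * r)"
proof -
  define B where "B n = {(x, y). 2 powr (- (real n * r)) \<le> cond_prob P n x y
                                  \<and> cond_prob P n x y \<le> 2 powr (- (real n * s))}" for n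
  define \<eta> where "\<eta> n = 2 powr (- (real n * s))" for n :: nat
  have "pmf (P n) z \<le> \<eta> n" if "z \<in> B n" for n z
    using that pmf_le_cond_prob[of P n "fst z" "snd z"] by (cases z) (simp add: B_def \<eta>_def)
  then have "\<exists>G\<subseteq>B n. min (1 - \<epsilon>) (measure (P n) (B n)) - \<eta> n \<le> measure (P n) G
      \<and> measure (P n) G \<le> min (1 - \<epsilon>) (measure (P n) (B n))" for n
    using \<open>\<epsilon> \<le> 1\<close> by (intro exists_subset_measure_between) (auto simp: \<eta>_def)
  then obtain G where G: "\<And>n. G n \<subseteq> B n"
    "\<And>n. min (1 - \<epsilon>) (measure (P n) (B n)) - \<eta> n \<le> measure (P n) (G n)"
    "\<And>n. measure (P n) (G n) \<le> min (1 - \<epsilon>) (measure (P n) (B n))"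
    by metis
  have "(\<lambda>n. (1 - measure (P n) (B n)) + \<eta> n) \<longlonglongrightarrow> (1 - 1) + 0"
  proof (intro tendsto_intros)
    show "(\<lambda>n. measure (P n) (B n)) \<longlonglongrightarrow> 1"
      unfolding B_def using assms(2,3) by (rule tendsto_measure_cond_prob_between)
    show "\<eta> \<longlonglongrightarrow> 0"
      unfolding \<eta>_def using \<open>0 < s\<close> by real_asymp
  qed
  then have "achievable_com P \<epsilon> (r * (1 - \<epsilon>))"
  proof (intro achievable_com_of_sets[where G = G])
    show "G n \<subseteq> {(x, y). 2 powr (- (real n * r)) \<le> cond_prob P n x y}" for n
      using G(1)[of n] by (auto simp: B_def)
    show "measure (P n) (G n) \<le> 1 - \<epsilon>" for n
      using G(3)[of n] by simp
    show "1 - measure (P n) (G n) \<le> \<epsilon> + ((1 - measure (P n) (B n)) + \<eta> n)" for n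
    proof -
      have "measure (P n) (B n) \<le> 1" by simp
      moreover consider "min (1 - \<epsilon>) (measure (P n) (B n)) = 1 - \<epsilon>"
        | "min (1 - \<epsilon>) (measure (P n) (B n)) = measure (P n) (B n)"
        by linarith
      ultimately show ?thesis using G(2)[of n] \<open>0 \<le> \<epsilon>\<close> by cases linarith+
    qed
  qed (use assms in auto)
  then show ?thesis by (simp add: mult.commute)
qed

subsection \<open>The optimal rate\<close>

lemma achievable_com_nonneg:
  assumes "achievable_com P \<epsilon> R"
  shows "0 \<le> R"
proof -
  obtain enc where "limsup (\<lambda>n. ereal (1 / real n) * enn2ereal (exp_length P n (enc n))) \<le> ereal R"
    using assms unfolding achievable_com_def by blast
  moreover have "0 \<le> limsup (\<lambda>n. ereal (1 / real n) * enn2ereal (exp_length P n (enc n)))"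
    by (intro le_Limsup) auto
  ultimately have "0 \<le> ereal R" by (metis order.trans)
  then show ?thesis by simp
qed

lemma achievable_com_one_zero: "achievable_com P 1 0"
  unfolding achievable_com_def
proof (intro exI conjI allI impI)
  show "valid_code n (\<lambda>x y. [])" for n
    by (simp add: valid_code_def prefix_free_def)
  show "limsup (\<lambda>n. ereal (error_prob P n (\<lambda>x y. []) (\<lambda>c y. undefined))) \<le> ereal 1"
    by (intro limsup_le_of_le_plus_vanishing[where u = "\<lambda>n. 0"]) (auto simp: error_prob_def)
  show "limsup (\<lambda>n. ereal (1 / real n) * enn2ereal (exp_length P n (\<lambda>x y. []))) \<le> ereal 0"
    by (intro limsup_le_of_le_plus_vanishing[where u = "\<lambda>n. 0"]) (auto simp: exp_length_def zero_ennreal.rep_eq)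
qed

lemma R_com_le: "achievable_com P \<epsilon> R \<Longrightarrow> R_com P \<epsilon> \<le> ereal R"
  unfolding R_com_def by (rule Inf_lower) simp

lemma R_com_ge_inf_entropy:
  fixes P :: "nat \<Rightarrow> ('a list \<times> 'b list) pmf"
  assumes "0 \<le> \<epsilon>" and "\<epsilon> \<le> 1"
  shows "ereal (1 - \<epsilon>) * cond_spectral_inf_entropy P \<le> R_com P \<epsilon>"
  unfolding R_com_def
proof (rule Inf_greatest, clarify)
  fix R assume R: "achievable_com P \<epsilon> R"
  show "ereal (1 - \<epsilon>) * cond_spectral_inf_entropy P \<le> ereal R"
  proof (cases "\<epsilon> = 1")
    case True
    then show ?thesis using achievable_com_nonneg[OF R] by (simp flip: zero_ereal_def)
  next
    case False
    with assms(2) have "0 < 1 - \<epsilon>" by simp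
    have "cond_spectral_inf_entropy P \<le> ereal (R / (1 - \<epsilon>))"
    proof (rule dense_le)
      fix x assume "x < cond_spectral_inf_entropy P"
      show "x \<le> ereal (R / (1 - \<epsilon>))"
      proof (cases x)
        case (real a)
        show ?thesis
        proof (cases "0 < a")
          case True
          then have "a * (1 - \<epsilon>) \<le> R"
            using achievable_com_rate_ge[OF R] \<open>x < _\<close> real by blast
          then show ?thesis using \<open>0 < 1 - \<epsilon>\<close> real by (simp add: pos_le_divide_eq)
        next
          case False
          have "0 \<le> R / (1 - \<epsilon>)" using achievable_com_nonneg[OF R] \<open>0 < 1 - \<epsilon>\<close> by simp
          then show ?thesis using False real by simp
        qed
      qed (use \<open>x < _\<close> in simp_all)
    qed
    then have "ereal (1 - \<epsilon>) * cond_spectral_inf_entropy P \<le> ereal (1 - \<epsilon>) * ereal (R / (1 - \<epsilon>))"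
      by (rule ereal_mult_left_mono) (use \<open>0 < 1 - \<epsilon>\<close> in simp)
    then show ?thesis using \<open>0 < 1 - \<epsilon>\<close> by simp
  qed
qed

lemma R_com_le_of_strong_converse:
  fixes P :: "nat \<Rightarrow> ('a::countable list \<times> 'b::countable list) pmf"
  assumes "cond_spectral_inf_entropy P = ereal h" and "cond_spectral_sup_entropy P = ereal h"
    and "0 \<le> \<epsilon>" and "\<epsilon> \<le> 1"
  shows "R_com P \<epsilon> \<le> ereal ((1 - \<epsilon>) * h)"
proof (rule ereal_le_epsilon2)
  fix e :: real assume "0 < e"
  have "0 \<le> h" using cond_spectral_inf_entropy_nonneg[of P] assms(1) by simp
  obtain R where "achievable_com P \<epsilon> R" "R \<le> (1 - \<epsilon>) * h + e"
  proof (cases "h = 0")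
    case True
    then have "achievable_com P \<epsilon> e"
      using assms \<open>0 < e\<close> by (intro achievable_com_above_sup_entropy) auto
    then show ?thesis using True that by simp
  next
    case False
    with \<open>0 \<le> h\<close> have "achievable_com P \<epsilon> ((1 - \<epsilon>) * (h + e))"
      using assms \<open>0 < e\<close> by (intro achievable_com_between_entropies[where s = "h / 2"]) auto
    moreover have "(1 - \<epsilon>) * (h + e) \<le> (1 - \<epsilon>) * h + e"
      using assms(3) \<open>0 < e\<close> by (simp add: algebra_simps)
    ultimately show ?thesis using that by blast
  qed
  then show "R_com P \<epsilon> \<le> ereal ((1 - \<epsilon>) * h) + ereal e"
    using R_com_le[of P \<epsilon> R] by (simp add: order_trans)
qed

theorem corollary1:
  fixes P :: "nat \<Rightarrow> ('a::countable list \<times> 'b::countable list) pmf"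
    and \<epsilon> :: real
  assumes "general_source P"
    and "cond_spectral_inf_entropy P = cond_spectral_sup_entropy P"
    and "0 \<le> \<epsilon>" and "\<epsilon> \<le> 1"
  shows "R_com P \<epsilon> = ereal (1 - \<epsilon>) * cond_spectral_inf_entropy P
       \<and> R_com P \<epsilon> = ereal (1 - \<epsilon>) * cond_spectral_sup_entropy P"
proof -
  have "R_com P \<epsilon> \<le> ereal (1 - \<epsilon>) * cond_spectral_inf_entropy P"
  proof (cases "cond_spectral_inf_entropy P")
    case (real h)
    then show ?thesis using R_com_le_of_strong_converse[of P h \<epsilon>] assms(2-4) by simp
  next
    case PInf
    then show ?thesis
      using R_com_le[OF achievable_com_one_zero, of P] assms(4)
      by (cases "\<epsilon> = 1") (auto simp flip: zero_ereal_def)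
  next
    case MInf
    then show ?thesis using cond_spectral_inf_entropy_nonneg[of P] by simp
  qed
  moreover have "ereal (1 - \<epsilon>) * cond_spectral_inf_entropy P \<le> R_com P \<epsilon>"
    using assms(3,4) by (rule R_com_ge_inf_entropy)
  ultimately show ?thesis using assms(2) by simp
qed

end
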